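(* In the setting below, for every $H\ge1$, $$\|\widehat{Q}_0-Q_0\|_\infty\le\sum_{h=0}^{H-1}\gamma^{h+1}L\,\big\|(\widehat{P}_\mathcal{K}-P_\mathcal{K})\widehat{V}_{h+1}\big\|_\infty.$$
   Context: $M=(\mathcal{S},\mathcal{A},P,r,\gamma)$ is a discounted MDP (finite $\mathcal{S},\mathcal{A}$, $r\in[0,1]$, $\gamma\in(0,1)$) with $P(s'|s,a)=\sum_{k}\phi_k(s,a)\psi_k(s')$. Regularity assumption: there are a set $\mathcal{K}=\{(s_k,a_k)\}$ of state-action pairs and $L\ge1$ such that for every $(s,a)$ there are real coefficients $\lambda_k^{s,a}$ with $\phi(s,a)=\sum_{k\in\mathcal{K}}\lambda_k^{s,a}\phi(s_k,a_k)$ and $\sum_{k\in\mathcal{K}}|\lambda_k^{s,a}|\le L$. $P_\mathcal{K}$ is the $|\mathcal{K}|\times|\mathcal{S}|$ matrix of rows $P(\cdot|s_k,a_k)$; $\widehat{P}_\mathcal{K}$ has rows the empirical distributions of $N$ samples from $P(\cdot|s_k,a_k)$; $\widehat{P}(s'|s,a)=\sum_k\lambda_k^{s,a}\widehat{P}_\mathcal{K}(s'|s_k,a_k)$ (possibly with negative entries). Value iteration for $H$ steps: $\widehat{V}_H=V_H=0$; for $h=H-1,\dots,0$, $\widehat{Q}_h=r+\gamma\widehat{P}\widehat{V}_{h+1}$, $\widehat{V}_h(s)=\max_a\widehat{Q}_h(s,a)$, and $Q_h=r+\gamma PV_{h+1}$, $V_h(s)=\max_aQ_h(s,a)$. For $V:\mathcal{S}\to\mathbb{R}$,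 $(\widehat{P}_\mathcal{K}-P_\mathcal{K})V$ is the vector $k\mapsto\sum_{s'}(\widehat{P}_\mathcal{K}(s'|s_k,a_k)-P(s'|s_k,a_k))V(s')$. *)

theory Defs
  imports Complex_Main
begin

text \<open>Finite-horizon value iteration with a (possibly signed) transition kernel
  Pm s a s'. Vit n is the value function with n steps remaining, so that
  V_h = Vit (H - h) and V_H = Vit 0 = 0.\<close>

fun Vit :: "('s \<Rightarrow> 'a::finite \<Rightarrow> 's::finite \<Rightarrow> real) \<Rightarrow> ('s \<Rightarrow> 'a \<Rightarrow> real) \<Rightarrow> real \<Rightarrow> nat \<Rightarrow> 's \<Rightarrow> real" where
  "Vit Pm r \<gamma> 0 s = 0"
| "Vit Pm r \<gamma> (Suc n) s =
     Max (range (\<lambda>a. r s a + \<gamma> * (\<Sum>s'\<in>UNIV. Pm s a s' * Vit Pm r \<gamma> n s')))"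

definition Vh :: "('s \<Rightarrow> 'a::finite \<Rightarrow> 's::finite \<Rightarrow> real) \<Rightarrow> ('s \<Rightarrow> 'a \<Rightarrow> real) \<Rightarrow> real \<Rightarrow> nat \<Rightarrow> nat \<Rightarrow> 's \<Rightarrow> real" where
  "Vh Pm r \<gamma> H h = Vit Pm r \<gamma> (H - h)"

definition Qh :: "('s \<Rightarrow> 'a::finite \<Rightarrow> 's::finite \<Rightarrow> real) \<Rightarrow> ('s \<Rightarrow> 'a \<Rightarrow> real) \<Rightarrow> real \<Rightarrow> nat \<Rightarrow> nat \<Rightarrow> 's \<Rightarrow> 'a \<Rightarrow> real" where
  "Qh Pm r \<gamma> H h s a = r s a + \<gamma> * (\<Sum>s'\<in>UNIV. Pm s a s' * Vh Pm r \<gamma> H (Suc h) s')"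

definition supnorm :: "('x::finite \<Rightarrow> real) \<Rightarrow> real" where
  "supnorm f = Max (range (\<lambda>x. \<bar>f x\<bar>))"

definition empirical :: "nat \<Rightarrow> (nat \<Rightarrow> 's) \<Rightarrow> 's \<Rightarrow> real" where
  "empirical N samp s' = real (card {i. i < N \<and> samp i = s'}) / real N"

end

theory Submission
  imports Defs
begin

text \<open>Let \<open>E n\<close> be the sup norm of \<open>(Phat_K - P_K) Vhat_n\<close> and \<open>D n\<close> that of
  \<open>Vhat_n - V_n\<close>, where \<open>n\<close> counts the remaining steps. Pushing the anchor identity for
  \<open>\<phi>\<close> through the factorisation writes every row \<open>P(\<cdot>|s,a)\<close> as \<open>\<Sum>k. \<lambda>\<^sub>k P(\<cdot>|s\<^sub>k,a\<^sub>k)\<close>, and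
  \<open>Phat(\<cdot>|s,a)\<close> is the same combination of the empirical rows, so
  \<open>\<bar>(Phat - P) Vhat_n\<bar> \<le> L * E n\<close>. Splitting
  \<open>Phat Vhat_n - P V_n = (Phat - P) Vhat_n + P (Vhat_n - V_n)\<close>, the second term is at
  most \<open>D n\<close> because \<open>P\<close> is stochastic, and maximising over actions is 1-Lipschitz; hence
  \<open>D (n + 1) \<le> \<gamma> * (L * E n + D n)\<close>, which unrolls to the discounted sum.\<close>

lemma abs_le_supnorm: "\<bar>f x\<bar> \<le> supnorm f"
  unfolding supnorm_def by (rule Max_ge) auto

lemma supnorm_nonneg: "0 \<le> supnorm f"
  using abs_le_supnorm[of f undefined] by linarith

lemma supnorm_least: "(\<And>x. \<bar>f x\<bar> \<le> c) \<Longrightarrow> supnorm f \<le> c"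
  unfolding supnorm_def by (subst Max_le_iff) auto

lemma abs_Max_range_diff_le:
  fixes f g :: "'a::finite \<Rightarrow> real"
  assumes "\<And>x. \<bar>f x - g x\<bar> \<le> c"
  shows "\<bar>Max (range f) - Max (range g)\<bar> \<le> c"
proof -
  have "Max (range f) \<in> range f" "Max (range g) \<in> range g"
    by (auto intro: Max_in)
  then obtain x y where x: "Max (range f) = f x" and y: "Max (range g) = g y"
    by blast
  have "g x \<le> Max (range g)" "f y \<le> Max (range f)"
    by (auto intro: Max_ge)
  with x y assms[of x] assms[of y] show ?thesis
    by linarith
qed

lemma abs_sum_mult_le_supnorm:
  fixes g :: "'k::finite \<Rightarrow> real"
  shows "\<bar>\<Sum>k\<in>UNIV. c k * g k\<bar> \<le> (\<Sum>k\<in>UNIV. \<bar>c k\<bar>) * supnorm g"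
proof -
  have "\<bar>\<Sum>k\<in>UNIV. c k * g k\<bar> \<le> (\<Sum>k\<in>UNIV. \<bar>c k\<bar> * supnorm g)"
    by (rule order_trans[OF sum_abs])
      (auto intro!: sum_mono mult_left_mono abs_le_supnorm simp: abs_mult)
  then show ?thesis
    by (simp add: sum_distrib_right)
qed

lemma expectation_diff_le:
  fixes p V W :: "'x::finite \<Rightarrow> real"
  assumes p_nonneg: "\<And>x. 0 \<le> p x" and p_sum: "(\<Sum>x\<in>UNIV. p x) = 1"
    and close: "\<And>x. \<bar>V x - W x\<bar> \<le> c"
  shows "\<bar>(\<Sum>x\<in>UNIV. p x * V x) - (\<Sum>x\<in>UNIV. p x * W x)\<bar> \<le> c"
proof -
  have "\<bar>(\<Sum>x\<in>UNIV. p x * V x) - (\<Sum>x\<in>UNIV. p x * W x)\<bar> = \<bar>\<Sum>x\<in>UNIV. p x * (V x - W x)\<bar>"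
    by (simp add: sum_subtractf right_diff_distrib)
  also have "\<dots> \<le> (\<Sum>x\<in>UNIV. p x * c)"
    by (rule order_trans[OF sum_abs])
      (auto intro!: sum_mono mult_left_mono close p_nonneg simp: abs_mult abs_of_nonneg[OF p_nonneg])
  also have "\<dots> = c"
    by (simp add: sum_distrib_right[symmetric] p_sum)
  finally show ?thesis .
qed

lemma backup_diff_le:
  fixes p q V' V :: "'x::finite \<Rightarrow> real"
  assumes p_nonneg: "\<And>x. 0 \<le> p x" and p_sum: "(\<Sum>x\<in>UNIV. p x) = 1" and "0 \<le> \<gamma>"
    and model_err: "\<bar>(\<Sum>x\<in>UNIV. q x * V' x) - (\<Sum>x\<in>UNIV. p x * V' x)\<bar> \<le> e"
    and value_err: "\<And>x. \<bar>V' x - V x\<bar> \<le> c"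
  shows "\<bar>(\<rho> + \<gamma> * (\<Sum>x\<in>UNIV. q x * V' x)) - (\<rho> + \<gamma> * (\<Sum>x\<in>UNIV. p x * V x))\<bar> \<le> \<gamma> * (e + c)"
proof -
  have "\<bar>(\<Sum>x\<in>UNIV. p x * V' x) - (\<Sum>x\<in>UNIV. p x * V x)\<bar> \<le> c"
    by (rule expectation_diff_le[OF p_nonneg p_sum value_err])
  with model_err have "\<bar>(\<Sum>x\<in>UNIV. q x * V' x) - (\<Sum>x\<in>UNIV. p x * V x)\<bar> \<le> e + c"
    by linarith
  then have "\<gamma> * \<bar>(\<Sum>x\<in>UNIV. q x * V' x) - (\<Sum>x\<in>UNIV. p x * V x)\<bar> \<le> \<gamma> * (e + c)"
    using \<open>0 \<le> \<gamma>\<close> by (rule mult_left_mono)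
  then show ?thesis
    using \<open>0 \<le> \<gamma>\<close> by (simp add: right_diff_distrib[symmetric] abs_mult)
qed

definition propagated_error :: "real \<Rightarrow> (nat \<Rightarrow> real) \<Rightarrow> nat \<Rightarrow> real" where
  "propagated_error \<gamma> e n = (\<Sum>h<n. \<gamma> ^ (h + 1) * e (n - 1 - h))"

lemma propagated_error_0 [simp]: "propagated_error \<gamma> e 0 = 0"
  by (simp add: propagated_error_def)

lemma propagated_error_Suc:
  "propagated_error \<gamma> e (Suc n) = \<gamma> * (e n + propagated_error \<gamma> e n)"
  unfolding propagated_error_def
  by (subst sum.lessThan_Suc_shift) (simp add: sum_distrib_left algebra_simps)

lemma Vit_diff_le:
  fixes P Phat :: "'s::finite \<Rightarrow> 'a::finite \<Rightarrow> 's \<Rightarrow> real"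
  assumes P_nonneg: "\<And>s a s'. 0 \<le> P s a s'" and P_sum: "\<And>s a. (\<Sum>s'\<in>UNIV. P s a s') = 1"
    and "0 \<le> \<gamma>"
    and model_err: "\<And>n s a. \<bar>(\<Sum>s'\<in>UNIV. Phat s a s' * Vit Phat r \<gamma> n s')
                              - (\<Sum>s'\<in>UNIV. P s a s' * Vit Phat r \<gamma> n s')\<bar> \<le> e n"
  shows "\<bar>Vit Phat r \<gamma> n s - Vit P r \<gamma> n s\<bar> \<le> propagated_error \<gamma> e n"
proof (induction n arbitrary: s)
  case 0
  then show ?case by simp
next
  case (Suc n)
  show ?case
    unfolding Vit.simps propagated_error_Suc
    by (intro abs_Max_range_diff_le backup_diff_le[OF P_nonneg P_sum \<open>0 \<le> \<gamma>\<close> model_err Suc.IH])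
qed

lemma lowrank_anchor_decomposition:
  fixes \<phi> :: "'s \<Rightarrow> 'a \<Rightarrow> 'd::finite \<Rightarrow> real" and lam :: "'s \<Rightarrow> 'a \<Rightarrow> 'k::finite \<Rightarrow> real"
  assumes lowrank: "\<And>s a s'. P s a s' = (\<Sum>d\<in>UNIV. \<phi> s a d * \<psi> d s')"
    and anchor: "\<And>s a d. \<phi> s a d = (\<Sum>k\<in>UNIV. lam s a k * \<phi> (sk k) (ak k) d)"
  shows "P s a s' = (\<Sum>k\<in>UNIV. lam s a k * P (sk k) (ak k) s')"
proof -
  have "P s a s' = (\<Sum>d\<in>UNIV. \<Sum>k\<in>UNIV. lam s a k * \<phi> (sk k) (ak k) d * \<psi> d s')"
    by (simp add: lowrank anchor[of s a] sum_distrib_right)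
  also have "\<dots> = (\<Sum>k\<in>UNIV. lam s a k * (\<Sum>d\<in>UNIV. \<phi> (sk k) (ak k) d * \<psi> d s'))"
    by (subst sum.swap) (simp add: sum_distrib_left mult.assoc)
  finally show ?thesis
    by (simp add: lowrank)
qed

lemma combination_expectation_diff_eq:
  fixes V :: "'x::finite \<Rightarrow> real" and lam :: "'k::finite \<Rightarrow> real"
  assumes q: "\<And>x. q x = (\<Sum>k\<in>UNIV. lam k * Q' k x)"
    and p: "\<And>x. p x = (\<Sum>k\<in>UNIV. lam k * Q k x)"
  shows "(\<Sum>x\<in>UNIV. q x * V x) - (\<Sum>x\<in>UNIV. p x * V x)
         = (\<Sum>k\<in>UNIV. lam k * (\<Sum>x\<in>UNIV. (Q' k x - Q k x) * V x))"
proof -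
  have "q x * V x - p x * V x = (\<Sum>k\<in>UNIV. lam k * ((Q' k x - Q k x) * V x))" for x
    unfolding q p sum_distrib_right sum_subtractf[symmetric] by (simp add: algebra_simps)
  then have "(\<Sum>x\<in>UNIV. q x * V x) - (\<Sum>x\<in>UNIV. p x * V x)
      = (\<Sum>x\<in>UNIV. \<Sum>k\<in>UNIV. lam k * ((Q' k x - Q k x) * V x))"
    by (simp add: sum_subtractf[symmetric])
  also have "\<dots> = (\<Sum>k\<in>UNIV. lam k * (\<Sum>x\<in>UNIV. (Q' k x - Q k x) * V x))"
    by (subst sum.swap) (simp add: sum_distrib_left)
  finally show ?thesis .
qed

lemma combination_expectation_diff_le:
  fixes V :: "'x::finite \<Rightarrow> real" and lam :: "'k::finite \<Rightarrow> real"
  assumes q: "\<And>x. q x = (\<Sum>k\<in>UNIV. lam k * Q' k x)"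
    and p: "\<And>x. p x = (\<Sum>k\<in>UNIV. lam k * Q k x)"
    and lam_bound: "(\<Sum>k\<in>UNIV. \<bar>lam k\<bar>) \<le> L"
  shows "\<bar>(\<Sum>x\<in>UNIV. q x * V x) - (\<Sum>x\<in>UNIV. p x * V x)\<bar>
         \<le> L * supnorm (\<lambda>k. \<Sum>x\<in>UNIV. (Q' k x - Q k x) * V x)"
proof -
  let ?g = "\<lambda>k. \<Sum>x\<in>UNIV. (Q' k x - Q k x) * V x"
  have "\<bar>(\<Sum>x\<in>UNIV. q x * V x) - (\<Sum>x\<in>UNIV. p x * V x)\<bar> = \<bar>\<Sum>k\<in>UNIV. lam k * ?g k\<bar>"
    by (simp only: combination_expectation_diff_eq[OF q p])
  also have "\<dots> \<le> (\<Sum>k\<in>UNIV. \<bar>lam k\<bar>) * supnorm ?g"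
    by (rule abs_sum_mult_le_supnorm)
  also have "\<dots> \<le> L * supnorm ?g"
    using lam_bound supnorm_nonneg by (rule mult_right_mono)
  finally show ?thesis .
qed

theorem lemma30:
  fixes P :: "'s::finite \<Rightarrow> 'a::finite \<Rightarrow> 's \<Rightarrow> real"
    and r :: "'s \<Rightarrow> 'a \<Rightarrow> real"
    and \<gamma> :: real
    and \<phi> :: "'s \<Rightarrow> 'a \<Rightarrow> 'd::finite \<Rightarrow> real"
    and \<psi> :: "'d \<Rightarrow> 's \<Rightarrow> real"
    and sk :: "'k::finite \<Rightarrow> 's" and ak :: "'k \<Rightarrow> 'a"
    and lam :: "'s \<Rightarrow> 'a \<Rightarrow> 'k \<Rightarrow> real"
    and L :: real
    and N :: nat
    and samp :: "'k \<Rightarrow> nat \<Rightarrow> 's"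
    and H :: nat
  assumes P_nonneg: "\<And>s a s'. P s a s' \<ge> 0"
    and P_sum: "\<And>s a. (\<Sum>s'\<in>UNIV. P s a s') = 1"
    and r_range: "\<And>s a. 0 \<le> r s a \<and> r s a \<le> 1"
    and gamma: "0 < \<gamma>" "\<gamma> < 1"
    and lowrank: "\<And>s a s'. P s a s' = (\<Sum>d\<in>UNIV. \<phi> s a d * \<psi> d s')"
    and L_ge: "L \<ge> 1"
    and anchor: "\<And>s a d. \<phi> s a d = (\<Sum>k\<in>UNIV. lam s a k * \<phi> (sk k) (ak k) d)"
    and lam_bound: "\<And>s a. (\<Sum>k\<in>UNIV. \<bar>lam s a k\<bar>) \<le> L"
    and N_pos: "N \<ge> 1"
    and H_pos: "H \<ge> 1"
  defines "PhatK \<equiv> \<lambda>k s'. empirical N (samp k) s'"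
    and "PK \<equiv> \<lambda>k s'. P (sk k) (ak k) s'"
    and "Phat \<equiv> \<lambda>s a s'. (\<Sum>k\<in>UNIV. lam s a k * empirical N (samp k) s')"
  shows "supnorm (\<lambda>(s, a). Qh Phat r \<gamma> H 0 s a - Qh P r \<gamma> H 0 s a)
         \<le> (\<Sum>h<H. \<gamma> ^ (h + 1) * L *
              supnorm (\<lambda>k. \<Sum>s'\<in>UNIV. (PhatK k s' - PK k s') * Vh Phat r \<gamma> H (h + 1) s'))"
proof -
  define e where "e n = L * supnorm (\<lambda>k. \<Sum>s'\<in>UNIV. (PhatK k s' - PK k s') * Vit Phat r \<gamma> n s')" for n
  have P_anchor: "P s a s' = (\<Sum>k\<in>UNIV. lam s a k * PK k s')" for s a s'
    unfolding PK_def using lowrank anchor by (rule lowrank_anchor_decomposition)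
  have model_err: "\<bar>(\<Sum>s'\<in>UNIV. Phat s a s' * Vit Phat r \<gamma> n s')
      - (\<Sum>s'\<in>UNIV. P s a s' * Vit Phat r \<gamma> n s')\<bar> \<le> e n" for n s a
    unfolding e_def using P_anchor lam_bound
    by (rule combination_expectation_diff_le[rotated]) (simp add: Phat_def PhatK_def)
  have value_err: "\<bar>Vit Phat r \<gamma> n s - Vit P r \<gamma> n s\<bar> \<le> propagated_error \<gamma> e n" for n s
    using P_nonneg P_sum less_imp_le[OF gamma(1)] model_err by (rule Vit_diff_le)
  obtain m where m: "H = Suc m"
    using H_pos by (cases H) auto
  have "\<bar>Qh Phat r \<gamma> H 0 s a - Qh P r \<gamma> H 0 s a\<bar> \<le> propagated_error \<gamma> e H" for s a
    unfolding m propagated_error_Suc Qh_def Vh_def diff_Suc_Suc diff_zero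
    using P_nonneg P_sum less_imp_le[OF gamma(1)] model_err value_err by (rule backup_diff_le)
  then have "supnorm (\<lambda>(s, a). Qh Phat r \<gamma> H 0 s a - Qh P r \<gamma> H 0 s a) \<le> propagated_error \<gamma> e H"
    by (intro supnorm_least) auto
  also have "propagated_error \<gamma> e H = (\<Sum>h<H. \<gamma> ^ (h + 1) * L *
              supnorm (\<lambda>k. \<Sum>s'\<in>UNIV. (PhatK k s' - PK k s') * Vh Phat r \<gamma> H (h + 1) s'))"
    by (simp add: propagated_error_def e_def Vh_def mult.assoc)
  finally show ?thesis .
qed

end
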